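(* Let $Q$ be an equivariantly supported quantale with base locale $Q_0$ and support $\varsigma$. Then the map $Q_0\to R(Q)$ defined by $a\mapsto a\triangleright1_Q$ is an order isomorphism whose inverse is the restriction $\varsigma:R(Q)\to Q_0$. In particular, $R(Q)$ is a locale.
   Context: For a locale $A$, an $A$-$A$-bimodule is a sup-lattice $M$ with actions $a\triangleright m$, $m\triangleleft a$ preserving joins in each variable, with $1_A\triangleright m=m$, $(a\wedge b)\triangleright m=a\triangleright(b\triangleright m)$, $m\triangleleft1_A=m$, $m\triangleleft(a\wedge b)=(m\triangleleft a)\triangleleft b$, $(a\triangleright m)\triangleleft b=a\triangleright(m\triangleleft b)$. An $A$-$A$-quantale is such a $Q$ with associative join-preserving multiplication and $(a\triangleright x)y=a\triangleright(xy)$, $(x\triangleleft a)y=x(a\triangleright y)$, $(xy)\triangleleft a=x(y\triangleleft a)$; involutive if there is a join-preserving $x\mapsto x^*$ with $x^{**}=x$, $(xy)^*=y^*x^*$, $(a\triangleright(x\triangleleft b))^*=b\triangleright(x^*\triangleleft a)$. A based quantale is an involutive $Q_0$-$Q_0$-quantale for some locale $Q_0$; $1_Q$ is its top. A support is a join-preserving $\varsigma:Q\to Q_0$ with $\varsigma(1_Q)=1_{Q_0}$, $\varsigma(x)\triangleright y\le xx^*y$, $\varsigma(x)\triangleright x=x$; equivariant if $\varsigma(a\triangleright x)=a\wedge\varsigma(x)$. An equivariantly supported quantale is a based quantale with an equivariant support. $R(Q)=\{x\in Q\mid x1_Q\le x\}$ is the set of right-sided elements. *)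

theory Defs
  imports Main
begin

text \<open>Locales (frames): complete lattices in which binary meets distribute over
arbitrary joins. Top is 1, meet is inf.\<close>
class frame = complete_lattice +
  assumes inf_Sup_frame: "inf a (Sup S) = (SUP s\<in>S. inf a s)"

locale eq_supported_quantale =
  fixes lact :: "'a::frame \<Rightarrow> 'q::complete_lattice \<Rightarrow> 'q"
    and ract :: "'q \<Rightarrow> 'a \<Rightarrow> 'q"
    and mult :: "'q \<Rightarrow> 'q \<Rightarrow> 'q"
    and inv :: "'q \<Rightarrow> 'q"
    and supp :: "'q \<Rightarrow> 'a"
  assumes lact_Sup_left: "\<And>A m. lact (Sup A) m = (SUP a\<in>A. lact a m)"
    and lact_Sup_right: "\<And>a M. lact a (Sup M) = (SUP m\<in>M. lact a m)"
    and ract_Sup_left: "\<And>M a. ract (Sup M) a = (SUP m\<in>M. ract m a)"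
    and ract_Sup_right: "\<And>m A. ract m (Sup A) = (SUP a\<in>A. ract m a)"
    and lact_top: "\<And>m. lact top m = m"
    and lact_inf: "\<And>a b m. lact (inf a b) m = lact a (lact b m)"
    and ract_top: "\<And>m. ract m top = m"
    and ract_inf: "\<And>a b m. ract m (inf a b) = ract (ract m a) b"
    and lact_ract: "\<And>a b m. ract (lact a m) b = lact a (ract m b)"
    and mult_assoc: "\<And>x y z. mult (mult x y) z = mult x (mult y z)"
    and mult_Sup_left: "\<And>X y. mult (Sup X) y = (SUP x\<in>X. mult x y)"
    and mult_Sup_right: "\<And>x Y. mult x (Sup Y) = (SUP y\<in>Y. mult x y)"
    and lact_mult: "\<And>a x y. mult (lact a x) y = lact a (mult x y)"
    and ract_mult_lact: "\<And>a x y. mult (ract x a) y = mult x (lact a y)"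
    and mult_ract: "\<And>a x y. ract (mult x y) a = mult x (ract y a)"
    and inv_Sup: "\<And>X. inv (Sup X) = (SUP x\<in>X. inv x)"
    and inv_inv: "\<And>x. inv (inv x) = x"
    and inv_mult: "\<And>x y. inv (mult x y) = mult (inv y) (inv x)"
    and inv_act: "\<And>a b x. inv (lact a (ract x b)) = lact b (ract (inv x) a)"
    and supp_Sup: "\<And>X. supp (Sup X) = (SUP x\<in>X. supp x)"
    and supp_top: "supp top = top"
    and supp_le: "\<And>x y. lact (supp x) y \<le> mult (mult x (inv x)) y"
    and supp_lact_self: "\<And>x. lact (supp x) x = x"
    and supp_equivariant: "\<And>a x. supp (lact a x) = inf a (supp x)"

definition right_sided :: "('q::complete_lattice \<Rightarrow> 'q \<Rightarrow> 'q) \<Rightarrow> 'q set" where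
  "right_sided mult = {x. mult x top \<le> x}"

definition is_lub_in :: "'q::order set \<Rightarrow> 'q set \<Rightarrow> 'q \<Rightarrow> bool" where
  "is_lub_in R X s \<longleftrightarrow> s \<in> R \<and> (\<forall>x\<in>X. x \<le> s) \<and> (\<forall>u\<in>R. (\<forall>x\<in>X. x \<le> u) \<longrightarrow> s \<le> u)"

definition is_glb_in :: "'q::order set \<Rightarrow> 'q set \<Rightarrow> 'q \<Rightarrow> bool" where
  "is_glb_in R X s \<longleftrightarrow> s \<in> R \<and> (\<forall>x\<in>X. s \<le> x) \<and> (\<forall>u\<in>R. (\<forall>x\<in>X. u \<le> x) \<longrightarrow> u \<le> s)"

definition is_frame_subset :: "'q::order set \<Rightarrow> bool" where
  "is_frame_subset R \<longleftrightarrow>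
     (\<forall>X\<subseteq>R. \<exists>s. is_lub_in R X s) \<and>
     (\<forall>X\<subseteq>R. \<exists>s. is_glb_in R X s) \<and>
     (\<forall>a\<in>R. \<forall>X\<subseteq>R. \<forall>s m. is_lub_in R X s \<and> is_glb_in R {a, s} m \<longrightarrow>
        is_lub_in R {c. \<exists>x\<in>X. is_glb_in R {a, x} c} m)"

end

theory Submission
  imports Defs
begin

text \<open>Equivariance and \<open>\<varsigma>(1) = 1\<close> give \<open>\<varsigma>(a \<triangleright> 1) = a\<close>, so \<open>a \<mapsto> a \<triangleright> 1\<close> is an order
  embedding with left inverse \<open>\<varsigma>\<close>; its values are right-sided because the actions commute
  with multiplication. Conversely, for right-sided \<open>x\<close> the support axioms give
  \<open>\<varsigma>(x) \<triangleright> 1 \<le> x x\<^sup>* 1 \<le> x 1 \<le> x = \<varsigma>(x) \<triangleright> x \<le> \<varsigma>(x) \<triangleright> 1\<close>. Hence \<open>R(Q)\<close> is order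
  isomorphic to the locale \<open>Q\<^sub>0\<close>, and joins, meets and their distributivity transfer along
  the isomorphism.\<close>

lemma is_lub_in_unique: "is_lub_in R X s \<Longrightarrow> is_lub_in R X t \<Longrightarrow> s = t"
  unfolding is_lub_in_def by (meson antisym)

lemma is_glb_in_unique: "is_glb_in R X s \<Longrightarrow> is_glb_in R X t \<Longrightarrow> s = t"
  unfolding is_glb_in_def by (meson antisym)

lemma is_lub_in_range_order_embedding:
  fixes f :: "'a::complete_lattice \<Rightarrow> 'b::order"
  assumes "\<And>a b. f a \<le> f b \<longleftrightarrow> a \<le> b"
  shows "is_lub_in (range f) (f ` A) (f (Sup A))"
  unfolding is_lub_in_def using assms by (auto intro: Sup_upper Sup_least)

lemma is_glb_in_range_order_embedding:
  fixes f :: "'a::complete_lattice \<Rightarrow> 'b::order"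
  assumes "\<And>a b. f a \<le> f b \<longleftrightarrow> a \<le> b"
  shows "is_glb_in (range f) (f ` A) (f (Inf A))"
  unfolding is_glb_in_def using assms by (auto intro: Inf_lower Inf_greatest)

lemma is_frame_subset_range_order_embedding:
  fixes f :: "'a::frame \<Rightarrow> 'b::order"
  assumes ord: "\<And>a b. f a \<le> f b \<longleftrightarrow> a \<le> b"
  shows "is_frame_subset (range f)"
proof -
  have preimage: "X = f ` {a. f a \<in> X}" if "X \<subseteq> range f" for X
    using that by blast
  have glb_pair: "is_glb_in (range f) {f a, f b} (f (inf a b))" for a b
    using is_glb_in_range_order_embedding[OF ord, of "{a, b}"] by simp
  have distrib: "is_lub_in (range f) {c. \<exists>x\<in>X. is_glb_in (range f) {a, x} c} m"
    if a: "a \<in> range f" and X: "X \<subseteq> range f"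
      and s: "is_lub_in (range f) X s" and m: "is_glb_in (range f) {a, s} m" for a X s m
  proof -
    obtain b where b: "a = f b" using a by blast
    define A where "A = {a. f a \<in> X}"
    have X_eq: "X = f ` A" unfolding A_def using preimage[OF X] .
    have s_eq: "s = f (Sup A)"
      using is_lub_in_unique[OF s] is_lub_in_range_order_embedding[OF ord, of A] X_eq by simp
    have "m = f (inf b (Sup A))"
      using is_glb_in_unique[OF m] glb_pair[of b "Sup A"] b s_eq by simp
    also have "\<dots> = f (Sup (inf b ` A))"
      by (simp add: inf_Sup_frame)
    finally have m_eq: "m = f (Sup (inf b ` A))" .
    have "{c. \<exists>x\<in>X. is_glb_in (range f) {a, x} c} = f ` inf b ` A"
    proof (intro equalityI subsetI)
      fix c assume "c \<in> {c. \<exists>x\<in>X. is_glb_in (range f) {a, x} c}"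
      then obtain a' where "a' \<in> A" "is_glb_in (range f) {f b, f a'} c"
        using X_eq b by blast
      then show "c \<in> f ` inf b ` A"
        using is_glb_in_unique glb_pair by blast
    next
      fix c assume "c \<in> f ` inf b ` A"
      then show "c \<in> {c. \<exists>x\<in>X. is_glb_in (range f) {a, x} c}"
        using X_eq b glb_pair by blast
    qed
    then show ?thesis
      using m_eq is_lub_in_range_order_embedding[OF ord] by simp
  qed
  show ?thesis
    unfolding is_frame_subset_def
  proof (intro conjI allI impI ballI)
    fix X assume X: "X \<subseteq> range f"
    show "\<exists>s. is_lub_in (range f) X s"
      using is_lub_in_range_order_embedding[OF ord, of "{a. f a \<in> X}"] preimage[OF X] by metis
    show "\<exists>s. is_glb_in (range f) X s"
      using is_glb_in_range_order_embedding[OF ord, of "{a. f a \<in> X}"] preimage[OF X] by metis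
  next
    fix a X s m
    assume "a \<in> range f" "X \<subseteq> range f" "is_lub_in (range f) X s \<and> is_glb_in (range f) {a, s} m"
    then show "is_lub_in (range f) {c. \<exists>x\<in>X. is_glb_in (range f) {a, x} c} m"
      using distrib by blast
  qed
qed

lemma Sup_preserving_mono:
  fixes f :: "'a::complete_lattice \<Rightarrow> 'b::complete_lattice"
  assumes "\<And>A. f (Sup A) = (SUP a\<in>A. f a)"
  shows "mono f"
proof
  fix x y :: 'a
  assume "x \<le> y"
  then have "f y = sup (f x) (f y)"
    using assms[of "{x, y}"] by (simp add: sup.absorb2)
  then show "f x \<le> f y"
    by (metis sup.cobounded1)
qed

context eq_supported_quantale
begin

lemma lact_mono_right: "m \<le> n \<Longrightarrow> lact a m \<le> lact a n"
  using Sup_preserving_mono[of "lact a"] lact_Sup_right by (simp add: monoD)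

lemma lact_mono_left: "a \<le> b \<Longrightarrow> lact a m \<le> lact b m"
  using Sup_preserving_mono[of "\<lambda>a. lact a m"] lact_Sup_left by (metis monoD)

lemma mult_mono_right: "y \<le> z \<Longrightarrow> mult x y \<le> mult x z"
  using Sup_preserving_mono[of "mult x"] mult_Sup_right by (simp add: monoD)

lemma supp_mono: "x \<le> y \<Longrightarrow> supp x \<le> supp y"
  using Sup_preserving_mono[of supp] supp_Sup by (simp add: monoD)

lemma supp_lact_top: "supp (lact a top) = a"
  using supp_equivariant supp_top by simp

lemma lact_top_right_sided: "lact a top \<in> right_sided mult"
  unfolding right_sided_def mem_Collect_eq lact_mult by (rule lact_mono_right) simp

lemma lact_supp_top_right_sided:
  assumes "x \<in> right_sided mult"
  shows "lact (supp x) top = x"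
proof (rule antisym)
  have "lact (supp x) top \<le> mult (mult x (inv x)) top"
    by (rule supp_le)
  also have "\<dots> = mult x (mult (inv x) top)"
    by (rule mult_assoc)
  also have "\<dots> \<le> mult x top"
    by (rule mult_mono_right) simp
  also have "\<dots> \<le> x"
    using assms by (simp add: right_sided_def)
  finally show "lact (supp x) top \<le> x" .
  show "x \<le> lact (supp x) top"
    using lact_mono_right[of x top "supp x"] supp_lact_self by simp
qed

lemma lact_top_le_iff: "lact a top \<le> lact b top \<longleftrightarrow> a \<le> b"
proof
  show "lact a top \<le> lact b top \<Longrightarrow> a \<le> b"
    using supp_mono supp_lact_top by metis
  show "a \<le> b \<Longrightarrow> lact a top \<le> lact b top"
    by (rule lact_mono_left)
qed

lemma bij_betw_lact_top_right_sided: "bij_betw (\<lambda>a. lact a top) UNIV (right_sided mult)"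
  by (rule bij_betw_byWitness[where f' = supp])
    (auto simp: supp_lact_top lact_supp_top_right_sided lact_top_right_sided)

end

theorem corollary3p18:
  fixes lact :: "'a::frame \<Rightarrow> 'q::complete_lattice \<Rightarrow> 'q"
    and ract :: "'q \<Rightarrow> 'a \<Rightarrow> 'q"
    and mult :: "'q \<Rightarrow> 'q \<Rightarrow> 'q"
    and inv :: "'q \<Rightarrow> 'q"
    and supp :: "'q \<Rightarrow> 'a"
  assumes "eq_supported_quantale lact ract mult inv supp"
  shows "bij_betw (\<lambda>a. lact a top) UNIV (right_sided mult)
     \<and> (\<forall>a b. a \<le> b \<longleftrightarrow> lact a top \<le> lact b top)
     \<and> (\<forall>a. supp (lact a top) = a)
     \<and> (\<forall>x\<in>right_sided mult. lact (supp x) top = x)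
     \<and> is_frame_subset (right_sided mult)"
proof -
  interpret eq_supported_quantale lact ract mult inv supp by (rule assms)
  have "range (\<lambda>a. lact a top) = right_sided mult"
    using bij_betw_lact_top_right_sided by (rule bij_betw_imp_surj_on)
  then have "is_frame_subset (right_sided mult)"
    using is_frame_subset_range_order_embedding[of "\<lambda>a. lact a top"] lact_top_le_iff by metis
  then show ?thesis
    using bij_betw_lact_top_right_sided lact_top_le_iff supp_lact_top lact_supp_top_right_sided
    by blast
qed

end
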